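(* For every $\omega\in(0,\infty)$, the pair $(G_c,g(0))$ is observable, where $g$ is the solution of the boundary value problem described in the context.
   Context: Let $a\in\mathbb{R}$, $\tau>0$, $G_c=\begin{bmatrix}0&\omega\\-\omega&0\end{bmatrix}$, $E$ the $2\times2$ identity, $\gamma_c=[1,0]$, $\phi_0\equiv1$, $\phi_n(x)=\sqrt2\cos(n\pi x)$ ($n\ge1$), $\mathcal L(x)=\sum_{n=0}^N\ell_n\phi_n(x)$, where for some $\delta>0$, $N\in\mathbb{N}$ satisfies $a-(n\pi)^2<-\delta$ for $n>N$ and $L=[\ell_0\ \ldots\ \ell_N]^\top$ is chosen so that a positive-definite $Q$ satisfies $Q(A+LC)+(A+LC)^\top Q<-2\delta Q$, with $A=\mathrm{diag}(a-(n\pi)^2)_{n=0}^N$, $C=[1\ \sqrt2\ \ldots\ \sqrt2]$. $g\in H^2((0,1);\mathbb{R}^{1\times2})$ is the solution of $g''(x)=g(x)(G_c-aE)-\mathcal L(x)g(0)$, $g'(0)=0$, $g'(1)=-\gamma_ce^{-G_c\tau}$. Observability of a pair $(M,c)$ with $M\in\mathbb{R}^{2\times2}$, $c\in\mathbb{R}^{1\times2}$ means the matrix with rows $c$, $cM$ has rank 2. *)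

theory Defs
  imports "HOL-Analysis.Analysis"
begin

primrec matpow :: "real^'n^'n \<Rightarrow> nat \<Rightarrow> real^'n^'n" where
  "matpow M 0 = mat 1"
| "matpow M (Suc k) = matpow M k ** M"

definition mexp :: "real^'n^'n \<Rightarrow> real^'n^'n" where
  "mexp M = (\<Sum>k. (1 / fact k) *\<^sub>R matpow M k)"

definition observable :: "real^2^2 \<Rightarrow> real^2 \<Rightarrow> bool" where
  "observable M c \<longleftrightarrow> rank (vector [c, c v* M] :: real^2^2) = 2"

definition Gc :: "real \<Rightarrow> real^2^2" where
  "Gc \<omega> = vector [vector [0, \<omega>], vector [- \<omega>, 0]]"

definition gammac :: "real^2" where
  "gammac = vector [1, 0]"

definition phi :: "nat \<Rightarrow> real \<Rightarrow> real" where
  "phi n x = (if n = 0 then 1 else sqrt 2 * cos (real n * pi * x))"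

definition Lfun :: "nat \<Rightarrow> (nat \<Rightarrow> real) \<Rightarrow> real \<Rightarrow> real" where
  "Lfun N l x = (\<Sum>n\<le>N. l n * phi n x)"

(* (N+1)x(N+1) matrices indexed by {0..N}, represented as nat => nat => real *)
definition Amat :: "real \<Rightarrow> nat \<Rightarrow> nat \<Rightarrow> real" where
  "Amat a i j = (if i = j then a - (real i * pi)^2 else 0)"

definition Cvec :: "nat \<Rightarrow> real" where
  "Cvec j = (if j = 0 then 1 else sqrt 2)"

definition ALC :: "real \<Rightarrow> (nat \<Rightarrow> real) \<Rightarrow> nat \<Rightarrow> nat \<Rightarrow> real" where
  "ALC a l i j = Amat a i j + l i * Cvec j"

definition pos_def_mat :: "nat \<Rightarrow> (nat \<Rightarrow> nat \<Rightarrow> real) \<Rightarrow> bool" where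
  "pos_def_mat N Q \<longleftrightarrow> (\<forall>i\<le>N. \<forall>j\<le>N. Q i j = Q j i) \<and>
     (\<forall>v::nat \<Rightarrow> real. (\<exists>i\<le>N. v i \<noteq> 0) \<longrightarrow> (\<Sum>i\<le>N. \<Sum>j\<le>N. v i * Q i j * v j) > 0)"

definition lyap_ineq :: "nat \<Rightarrow> real \<Rightarrow> real \<Rightarrow> (nat \<Rightarrow> real) \<Rightarrow> (nat \<Rightarrow> nat \<Rightarrow> real) \<Rightarrow> bool" where
  "lyap_ineq N a \<delta> l Q \<longleftrightarrow>
     (\<forall>v::nat \<Rightarrow> real. (\<exists>i\<le>N. v i \<noteq> 0) \<longrightarrow>
        (\<Sum>i\<le>N. \<Sum>j\<le>N. v i *
           ((\<Sum>k\<le>N. Q i k * ALC a l k j) + (\<Sum>k\<le>N. ALC a l k i * Q k j) + 2 * \<delta> * Q i j)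
           * v j) < 0)"

end

theory Submission
  imports Defs
begin

(* If g(0) = 0, the term L(x) g(0) vanishes and g solves the homogeneous system
   g'' = g (G_c - aE) with g(0) = g'(0) = 0. A Gronwall estimate for the energy
   |g|^2 + |g'|^2 then forces g' = 0 on [0,1], contradicting g'(1) = -gamma_c e^{-tau G_c},
   which is nonzero because e^{-tau G_c} is a rotation: it is the matrix of the complex
   number e^{i omega tau}. So g(0) is nonzero, and every nonzero c makes (G_c, c)
   observable since det [c; c G_c] = omega |c|^2. *)

lemma observable_Gc:
  assumes "\<omega> \<noteq> 0" "c \<noteq> 0"
  shows "observable (Gc \<omega>) c"
proof -
  have "c$1 \<noteq> 0 \<or> c$2 \<noteq> 0" using assms(2) by (auto simp: vec_eq_iff forall_2)
  then have "(c$1)\<^sup>2 + (c$2)\<^sup>2 \<noteq> 0" by (simp add: sum_power2_eq_zero_iff)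
  moreover have "det (vector [c, c v* Gc \<omega>] :: real^2^2) = \<omega> * ((c$1)\<^sup>2 + (c$2)\<^sup>2)"
    by (simp add: det_2 Gc_def vector_matrix_mult_def sum_2 power2_eq_square algebra_simps)
  ultimately have "det (vector [c, c v* Gc \<omega>] :: real^2^2) \<noteq> 0"
    using assms(1) by simp
  then show ?thesis
    unfolding observable_def using det_eq_0_rank rank_bound[of "vector [c, c v* Gc \<omega>] :: real^2^2"]
    by fastforce
qed

definition mat_of_complex :: "complex \<Rightarrow> real^2^2" where
  "mat_of_complex z = vector [vector [Re z, - Im z], vector [Im z, Re z]]"

lemma mat_of_complex_mult: "mat_of_complex z ** mat_of_complex w = mat_of_complex (z * w)"
  by (simp add: mat_of_complex_def vec_eq_iff forall_2 matrix_matrix_mult_def sum_2 algebra_simps)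

lemma mat_of_complex_one: "mat_of_complex 1 = mat 1"
  by (simp add: mat_of_complex_def vec_eq_iff forall_2 mat_def)

lemma bounded_linear_mat_of_complex: "bounded_linear mat_of_complex"
  unfolding linear_conv_bounded_linear[symmetric]
  by (rule linearI) (simp_all add: mat_of_complex_def vec_eq_iff forall_2)

lemma matpow_mat_of_complex: "matpow (mat_of_complex z) k = mat_of_complex (z ^ k)"
  by (induction k) (simp_all add: mat_of_complex_one mat_of_complex_mult mult.commute)

lemma mexp_mat_of_complex: "mexp (mat_of_complex z) = mat_of_complex (exp z)"
proof -
  have "(\<lambda>k. mat_of_complex (z ^ k /\<^sub>R fact k)) sums mat_of_complex (exp z)"
    by (rule bounded_linear.sums[OF bounded_linear_mat_of_complex exp_converges])
  moreover have "mat_of_complex (z ^ k /\<^sub>R fact k) = (1 / fact k) *\<^sub>R matpow (mat_of_complex z) k" for k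
    using linear_scale[OF bounded_linear.linear[OF bounded_linear_mat_of_complex]]
    by (simp add: matpow_mat_of_complex inverse_eq_divide)
  ultimately show ?thesis unfolding mexp_def by (simp add: sums_iff)
qed

lemma gammac_mult_mexp_Gc_nonzero: "gammac v* mexp (- (\<tau> *\<^sub>R Gc \<omega>)) \<noteq> 0"
proof -
  define w where "w = exp (\<i> * complex_of_real (\<tau> * \<omega>))"
  have "- (\<tau> *\<^sub>R Gc \<omega>) = mat_of_complex (\<i> * complex_of_real (\<tau> * \<omega>))"
    by (simp add: mat_of_complex_def Gc_def vec_eq_iff forall_2)
  then have "gammac v* mexp (- (\<tau> *\<^sub>R Gc \<omega>)) = gammac v* mat_of_complex w"
    by (simp only: mexp_mat_of_complex w_def)
  also have "\<dots> = vector [Re w, - Im w]"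
    by (simp add: mat_of_complex_def gammac_def vec_eq_iff forall_2 vector_matrix_mult_def sum_2)
  finally have "gammac v* mexp (- (\<tau> *\<^sub>R Gc \<omega>)) = vector [Re w, - Im w]" .
  moreover have "w \<noteq> 0" by (simp add: w_def)
  then have "vector [Re w, - Im w] \<noteq> (0 :: real^2)"
    by (auto simp: vec_eq_iff forall_2 complex_eq_iff)
  ultimately show ?thesis by simp
qed

lemma gronwall_nonpos:
  fixes E E' :: "real \<Rightarrow> real"
  assumes deriv: "\<forall>t\<in>{0..b}. (E has_real_derivative E' t) (at t within {0..b})"
    and growth: "\<forall>t\<in>{0..b}. E' t \<le> C * E t"
    and "E 0 \<le> 0" and x: "x \<in> {0..b}"
  shows "E x \<le> 0"
proof -
  define F where "F t = exp (- (C * t)) * E t" for t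
  define F' where "F' t = exp (- (C * t)) * (E' t - C * E t)" for t
  have sub: "{0..x} \<subseteq> {0..b}" using x by auto
  have "(F has_vector_derivative F' t) (at t within {0..x})" if "t \<in> {0..x}" for t
  proof -
    have "(E has_real_derivative E' t) (at t within {0..x})"
      using deriv that sub by (meson DERIV_subset subsetD)
    then have "(F has_real_derivative F' t) (at t within {0..x})"
      unfolding F_def F'_def by (auto intro!: derivative_eq_intros simp: algebra_simps)
    then show ?thesis by (simp add: has_real_derivative_iff_has_vector_derivative)
  qed
  then have "(F' has_integral (F x - F 0)) {0..x}"
    using x by (intro fundamental_theorem_of_calculus) auto
  moreover have "F' t \<le> 0" if "t \<in> {0..x}" for t
    using growth that sub by (auto simp: F'_def mult_nonneg_nonpos)
  ultimately have "F x - F 0 \<le> 0"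
    by (rule has_integral_le[OF _ has_integral_0])
  then have "exp (- (C * x)) * E x \<le> 0"
    using \<open>E 0 \<le> 0\<close> by (simp add: F_def)
  then show ?thesis by (simp add: mult_le_0_iff)
qed

lemma second_order_linear_ode_zero:
  fixes g g' g'' :: "real \<Rightarrow> 'a::real_inner"
  assumes f: "bounded_linear f"
    and d1: "\<forall>t\<in>{0..b}. (g has_vector_derivative g' t) (at t within {0..b})"
    and d2: "\<forall>t\<in>{0..b}. (g' has_vector_derivative g'' t) (at t within {0..b})"
    and ode: "\<forall>t\<in>{0..b}. g'' t = f (g t)"
    and "g 0 = 0" "g' 0 = 0" and x: "x \<in> {0..b}"
  shows "g x = 0 \<and> g' x = 0"
proof -
  obtain K where K: "K > 0" "\<And>y. norm (f y) \<le> norm y * K"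
    using bounded_linear.pos_bounded[OF f] by blast
  define E where "E t = (norm (g t))\<^sup>2 + (norm (g' t))\<^sup>2" for t
  define E' where "E' t = 2 * inner (g t) (g' t) + 2 * inner (g' t) (g'' t)" for t
  have "(E has_real_derivative E' t) (at t within {0..b})" if "t \<in> {0..b}" for t
    using d1 d2 that
    unfolding E_def E'_def power2_norm_eq_inner has_vector_derivative_def has_field_derivative_def
    by (auto intro!: derivative_eq_intros simp: inner_commute algebra_simps)
  moreover have "E' t \<le> (1 + K) * E t" if "t \<in> {0..b}" for t
  proof -
    let ?u = "norm (g t)" and ?v = "norm (g' t)"
    have "inner (g' t) (g'' t) \<le> ?v * (?u * K)"
      using norm_cauchy_schwarz[of "g' t" "g'' t"] mult_left_mono[OF K(2)[of "g t"] norm_ge_zero[of "g' t"]]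
        ode that by simp
    then have "E' t \<le> (1 + K) * (2 * (?u * ?v))"
      using norm_cauchy_schwarz[of "g t" "g' t"] by (simp add: E'_def algebra_simps)
    also have "\<dots> \<le> (1 + K) * (?u\<^sup>2 + ?v\<^sup>2)"
      using sum_squares_bound[of ?u ?v] K(1) by (intro mult_left_mono) (simp_all add: mult.assoc)
    finally show ?thesis by (simp add: E_def)
  qed
  moreover have "E 0 \<le> 0" using \<open>g 0 = 0\<close> \<open>g' 0 = 0\<close> by (simp add: E_def)
  ultimately have "E x \<le> 0" using gronwall_nonpos x by blast
  then show ?thesis by (simp add: E_def sum_power2_le_zero_iff)
qed

theorem lemma4:
  fixes a \<tau> \<delta> \<omega> :: real and N :: nat and l :: "nat \<Rightarrow> real"
    and Q :: "nat \<Rightarrow> nat \<Rightarrow> real"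
    and g g' g'' :: "real \<Rightarrow> real^2"
  assumes "\<tau> > 0" and "\<delta> > 0"
    and "\<forall>n>N. a - (real n * pi)^2 < - \<delta>"
    and "pos_def_mat N Q"
    and "lyap_ineq N a \<delta> l Q"
    and "\<omega> > 0"
    and "\<forall>x\<in>{0..1}. (g has_vector_derivative g' x) (at x within {0..1})"
    and "\<forall>x\<in>{0..1}. (g' has_vector_derivative g'' x) (at x within {0..1})"
    and "\<forall>x\<in>{0..1}. g'' x = g x v* (Gc \<omega> - a *\<^sub>R mat 1) - Lfun N l x *\<^sub>R g 0"
    and "g' 0 = 0"
    and "g' 1 = - (gammac v* mexp (- (\<tau> *\<^sub>R Gc \<omega>)))"
  shows "observable (Gc \<omega>) (g 0)"
proof (rule ccontr)
  assume "\<not> observable (Gc \<omega>) (g 0)"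
  moreover have "\<omega> \<noteq> 0" using \<open>\<omega> > 0\<close> by simp
  ultimately have g0: "g 0 = 0" using observable_Gc by blast
  let ?M = "Gc \<omega> - a *\<^sub>R mat 1"
  have "(\<lambda>y. y v* ?M) = (*v) (transpose ?M)" by (simp add: fun_eq_iff)
  then have linear: "bounded_linear (\<lambda>y. y v* ?M)"
    by (simp only: matrix_vector_mul_bounded_linear)
  have ode: "\<forall>x\<in>{0..1}. g'' x = g x v* ?M" using assms(9) g0 by simp
  have "g 1 = 0 \<and> g' 1 = 0"
    by (rule second_order_linear_ode_zero[OF linear assms(7,8) ode g0 assms(10)]) simp
  then show False using assms(11) gammac_mult_mexp_Gc_nonzero[of \<tau> \<omega>] by simp
qed

end
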